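(* Consider the stochastic rolling-window dispatch problem $P_t$ described in the context with an optimal primal-dual solution, and define $\pi^{LMP}_t:=\lambda_t^*$ and, for ESR $i$, $\pi_{it}^{TLMP\text{-}C}:=\lambda^*_t-\xi_i^{C}\phi^*_{it}-\Delta_{it}^{C*}$, $\pi_{it}^{TLMP\text{-}D}:=\lambda^*_t-\phi^*_{it}/\xi_i^{D}+\Delta_{it}^{D*}$, where $\Delta_{it}^{C*}:=-(\bar{\mu}_{it}^{C*}-\underline{\mu}_{it}^{C*})+\sum_{k=1}^K(\bar{\mu}_{i(t+1)k}^{C*}-\underline{\mu}_{i(t+1)k}^{C*})$ and $\Delta_{it}^{D*}$ is defined identically with $D$ in place of $C$. Suppose that in window $\mathscr{H}_t$, at the optimal solution: (1) no ramping constraint of storage $i$ from $t-1$ to $t$, nor from $t$ to $t+1$ (in any scenario), is binding; and (2) no SOC limit constraint of storage $i$ is binding in any interval from $t$ to $t+W-1$ (in any scenario). Then $\pi_{it}^{TLMP\text{-}C}=\pi_{it}^{TLMP\text{-}D}=\pi^{LMP}_t$.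
   Context: Single-bus market with $N$ energy storage resources (ESRs) indexed by $i$. ESR $i$ has charging/discharging efficiencies $\xi_i^{C},\xi_i^{D}\in(0,1]$, SOC limits $\underline{E}_i\le\bar{E}_i$, charging/discharging power limits $(\underline{g}_i^{C},\bar{g}_i^{C})$, $(\underline{g}_i^{D},\bar{g}_i^{D})$, ramp limits $\underline{r}_i^{C},\bar{r}_i^{C},\underline{r}_i^{D},\bar{r}_i^{D}$, and bid-in charging benefit and discharging cost functions $f^{C}_{it},f^{D}_{it}$. At interval $t$ the operator solves, over the window $\mathscr{H}_t=\{t,\dots,t+W-1\}$, given realized inelastic demand $d_t$, $K$ demand forecast scenarios $\hat d_{t'k}$ ($t'\in\mathscr{H}_t\setminus\{t\}$) with probabilities $\epsilon_k$, and previously realized values $g^{C*}_{i(t-1)},g^{D*}_{i(t-1)},E^*_{i(t-1)}$, the problem $P_t$: minimize $\sum_i\big(f^{D}_{it}(g^{D}_{it})-f^{C}_{it}(g^{C}_{it})\big)+\sum_k\epsilon_k\sum_{t'\in\mathscr{H}_t\setminus\{t\}}\sum_i\big(f^{D}_{it'}(g^{D}_{it'k})-f^{C}_{it'}(g^{C}_{it'k})\big)$ subject to, for all $i$, $k$, $t'\in\mathscr{H}_t\setminus\{t\}$ (with the convention that in scenario $k$ the interval-$t$ variables are the binding variables $g_{it},E_{it}$): power balance $\sum_i(g^{D}_{it}-g^{C}_{it})=d_t$ (multiplier $\lambda_t$) and $\sum_i(g^{D}_{it'k}-g^{C}_{it'k})=\hat d_{t'k}$; SOC transition $E_{it}-E^*_{i(t-1)}=\xi_i^{C}g^{C}_{it}-g^{D}_{it}/\xi_i^{D}$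 (multiplier $\phi_{it}$) and $E_{it'k}-E_{i(t'-1)k}=\xi_i^{C}g^{C}_{it'k}-g^{D}_{it'k}/\xi_i^{D}$ (multiplier $\phi_{it'k}$); SOC limits $\underline{E}_i\le E_{it}\le\bar E_i$ (multipliers $\underline{\delta}_{it},\bar\delta_{it}$), $\underline{E}_i\le E_{it'k}\le\bar E_i$ (multipliers $\underline{\delta}_{it'k},\bar\delta_{it'k}$); ramping $-\underline{r}_i^{C}\le g^{C}_{it}-g^{C*}_{i(t-1)}\le\bar r_i^{C}$ (multipliers $\underline{\mu}^{C}_{it},\bar\mu^{C}_{it}$), $-\underline{r}_i^{C}\le g^{C}_{it'k}-g^{C}_{i(t'-1)k}\le\bar r_i^{C}$ (multipliers $\underline{\mu}^{C}_{it'k},\bar\mu^{C}_{it'k}$), and the same with $D$ in place of $C$; power limits $\underline g_i^{C}\le g^{C}\le\bar g_i^{C}$, $\underline g_i^{D}\le g^{D}\le\bar g_i^{D}$ for all binding and scenario variables (multipliers $\underline\rho,\bar\rho$). Multipliers of inequality constraints are nonnegative and enter the Lagrangian as $\bar\mu(x-\text{upper})+\underline\mu(\text{lower}-x)$; SOC transition equalities enter as $\phi\times$(LHS$-$RHS); power balance enters as $\lambda_t\big(d_t-\sum_i(g^D_{it}-g^C_{it})\big)$. $\pi^{LMP}_t$ is the locational marginal price and $\pi^{TLMP}_{it}$ the temporal locational marginal price of ESR $i$ (charging/discharging versions). *)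

theory Defs
  imports Main Complex_Main
begin

text \<open>ESRs are indexed by i < N, scenarios by k < K, time is absolute (nat).
  The current interval is t; the look-ahead scenario intervals are
  t' in {t+1 ..< t+W}.\<close>

record esr_data =
  xiC  :: "nat \<Rightarrow> real"
  xiD  :: "nat \<Rightarrow> real"
  Emin :: "nat \<Rightarrow> real"
  Emax :: "nat \<Rightarrow> real"
  gCmin :: "nat \<Rightarrow> real"
  gCmax :: "nat \<Rightarrow> real"
  gDmin :: "nat \<Rightarrow> real"
  gDmax :: "nat \<Rightarrow> real"
  rCdn :: "nat \<Rightarrow> real"
  rCup :: "nat \<Rightarrow> real"
  rDdn :: "nat \<Rightarrow> real"
  rDup :: "nat \<Rightarrow> real"
  fC :: "nat \<Rightarrow> nat \<Rightarrow> real \<Rightarrow> real"  \<comment> \<open>charging benefit f^C_{i t'}\<close>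
  fD :: "nat \<Rightarrow> nat \<Rightarrow> real \<Rightarrow> real"  \<comment> \<open>discharging cost f^D_{i t'}\<close>

record mkt_data =
  NN :: nat
  KK :: nat
  WW :: nat
  tt :: nat
  dem :: real          \<comment> \<open>realized demand d_t\<close>
  dhat :: "nat \<Rightarrow> nat \<Rightarrow> real"  \<comment> \<open>forecast dhat_{t' k}\<close>
  eps :: "nat \<Rightarrow> real"          \<comment> \<open>scenario probabilities\<close>
  gC0 :: "nat \<Rightarrow> real"
  gD0 :: "nat \<Rightarrow> real"
  E0  :: "nat \<Rightarrow> real"

text \<open>Primal variables: binding (interval t) ones indexed by i; scenario ones by i t' k.\<close>
record primal =
  gC :: "nat \<Rightarrow> real"
  gD :: "nat \<Rightarrow> real"
  E  :: "nat \<Rightarrow> real"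
  gCs :: "nat \<Rightarrow> nat \<Rightarrow> nat \<Rightarrow> real"
  gDs :: "nat \<Rightarrow> nat \<Rightarrow> nat \<Rightarrow> real"
  Es  :: "nat \<Rightarrow> nat \<Rightarrow> nat \<Rightarrow> real"

record dual =
  lam  :: real
  lams :: "nat \<Rightarrow> nat \<Rightarrow> real"
  phi  :: "nat \<Rightarrow> real"
  phis :: "nat \<Rightarrow> nat \<Rightarrow> nat \<Rightarrow> real"
  dlo  :: "nat \<Rightarrow> real"
  dhi  :: "nat \<Rightarrow> real"
  dlos :: "nat \<Rightarrow> nat \<Rightarrow> nat \<Rightarrow> real"
  dhis :: "nat \<Rightarrow> nat \<Rightarrow> nat \<Rightarrow> real"
  muClo :: "nat \<Rightarrow> real"
  muChi :: "nat \<Rightarrow> real"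
  muDlo :: "nat \<Rightarrow> real"
  muDhi :: "nat \<Rightarrow> real"
  muClos :: "nat \<Rightarrow> nat \<Rightarrow> nat \<Rightarrow> real"
  muChis :: "nat \<Rightarrow> nat \<Rightarrow> nat \<Rightarrow> real"
  muDlos :: "nat \<Rightarrow> nat \<Rightarrow> nat \<Rightarrow> real"
  muDhis :: "nat \<Rightarrow> nat \<Rightarrow> nat \<Rightarrow> real"
  rhoClo :: "nat \<Rightarrow> real"
  rhoChi :: "nat \<Rightarrow> real"
  rhoDlo :: "nat \<Rightarrow> real"
  rhoDhi :: "nat \<Rightarrow> real"
  rhoClos :: "nat \<Rightarrow> nat \<Rightarrow> nat \<Rightarrow> real"
  rhoChis :: "nat \<Rightarrow> nat \<Rightarrow> nat \<Rightarrow> real"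
  rhoDlos :: "nat \<Rightarrow> nat \<Rightarrow> nat \<Rightarrow> real"
  rhoDhis :: "nat \<Rightarrow> nat \<Rightarrow> nat \<Rightarrow> real"

definition scen_ints :: "mkt_data \<Rightarrow> nat set" where
  "scen_ints m = {tt m + 1 ..< tt m + WW m}"

definition prevC :: "mkt_data \<Rightarrow> primal \<Rightarrow> nat \<Rightarrow> nat \<Rightarrow> nat \<Rightarrow> real" where
  "prevC m x i t' k = (if t' = tt m + 1 then gC x i else gCs x i (t' - 1) k)"
definition prevD :: "mkt_data \<Rightarrow> primal \<Rightarrow> nat \<Rightarrow> nat \<Rightarrow> nat \<Rightarrow> real" where
  "prevD m x i t' k = (if t' = tt m + 1 then gD x i else gDs x i (t' - 1) k)"
definition prevE :: "mkt_data \<Rightarrow> primal \<Rightarrow> nat \<Rightarrow> nat \<Rightarrow> nat \<Rightarrow> real" where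
  "prevE m x i t' k = (if t' = tt m + 1 then E x i else Es x i (t' - 1) k)"

definition objective :: "esr_data \<Rightarrow> mkt_data \<Rightarrow> primal \<Rightarrow> real" where
  "objective p m x =
     (\<Sum>i<NN m. fD p i (tt m) (gD x i) - fC p i (tt m) (gC x i))
   + (\<Sum>k<KK m. eps m k * (\<Sum>t'\<in>scen_ints m. \<Sum>i<NN m.
          fD p i t' (gDs x i t' k) - fC p i t' (gCs x i t' k)))"

definition feasible :: "esr_data \<Rightarrow> mkt_data \<Rightarrow> primal \<Rightarrow> bool" where
  "feasible p m x \<longleftrightarrow>
     (\<Sum>i<NN m. gD x i - gC x i) = dem m
   \<and> (\<forall>k<KK m. \<forall>t'\<in>scen_ints m. (\<Sum>i<NN m. gDs x i t' k - gCs x i t' k) = dhat m t' k)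
   \<and> (\<forall>i<NN m.
        E x i - E0 m i = xiC p i * gC x i - gD x i / xiD p i
      \<and> Emin p i \<le> E x i \<and> E x i \<le> Emax p i
      \<and> - rCdn p i \<le> gC x i - gC0 m i \<and> gC x i - gC0 m i \<le> rCup p i
      \<and> - rDdn p i \<le> gD x i - gD0 m i \<and> gD x i - gD0 m i \<le> rDup p i
      \<and> gCmin p i \<le> gC x i \<and> gC x i \<le> gCmax p i
      \<and> gDmin p i \<le> gD x i \<and> gD x i \<le> gDmax p i
      \<and> (\<forall>k<KK m. \<forall>t'\<in>scen_ints m.
           Es x i t' k - prevE m x i t' k = xiC p i * gCs x i t' k - gDs x i t' k / xiD p i
         \<and> Emin p i \<le> Es x i t' k \<and> Es x i t' k \<le> Emax p i
         \<and> - rCdn p i \<le> gCs x i t' k - prevC m x i t' k \<and> gCs x i t' k - prevC m x i t' k \<le> rCup p i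
         \<and> - rDdn p i \<le> gDs x i t' k - prevD m x i t' k \<and> gDs x i t' k - prevD m x i t' k \<le> rDup p i
         \<and> gCmin p i \<le> gCs x i t' k \<and> gCs x i t' k \<le> gCmax p i
         \<and> gDmin p i \<le> gDs x i t' k \<and> gDs x i t' k \<le> gDmax p i))"

definition dual_feasible :: "mkt_data \<Rightarrow> dual \<Rightarrow> bool" where
  "dual_feasible m y \<longleftrightarrow>
     (\<forall>i<NN m. 0 \<le> dlo y i \<and> 0 \<le> dhi y i \<and> 0 \<le> muClo y i \<and> 0 \<le> muChi y i
        \<and> 0 \<le> muDlo y i \<and> 0 \<le> muDhi y i \<and> 0 \<le> rhoClo y i \<and> 0 \<le> rhoChi y i
        \<and> 0 \<le> rhoDlo y i \<and> 0 \<le> rhoDhi y i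
        \<and> (\<forall>k<KK m. \<forall>t'\<in>scen_ints m.
             0 \<le> dlos y i t' k \<and> 0 \<le> dhis y i t' k \<and> 0 \<le> muClos y i t' k \<and> 0 \<le> muChis y i t' k
           \<and> 0 \<le> muDlos y i t' k \<and> 0 \<le> muDhis y i t' k \<and> 0 \<le> rhoClos y i t' k \<and> 0 \<le> rhoChis y i t' k
           \<and> 0 \<le> rhoDlos y i t' k \<and> 0 \<le> rhoDhis y i t' k))"

text \<open>Lagrangian, with the sign conventions of the paper: inequality
  constraints as mu*(x - upper) + mu'*(lower - x), SOC transitions as
  phi*(LHS - RHS), power balances as lambda*(d - sum(gD - gC)).\<close>
definition lagrangian :: "esr_data \<Rightarrow> mkt_data \<Rightarrow> primal \<Rightarrow> dual \<Rightarrow> real" where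
  "lagrangian p m x y =
     objective p m x
   + lam y * (dem m - (\<Sum>i<NN m. gD x i - gC x i))
   + (\<Sum>k<KK m. \<Sum>t'\<in>scen_ints m. lams y t' k * (dhat m t' k - (\<Sum>i<NN m. gDs x i t' k - gCs x i t' k)))
   + (\<Sum>i<NN m.
        phi y i * ((E x i - E0 m i) - (xiC p i * gC x i - gD x i / xiD p i))
      + dhi y i * (E x i - Emax p i) + dlo y i * (Emin p i - E x i)
      + muChi y i * ((gC x i - gC0 m i) - rCup p i) + muClo y i * (- rCdn p i - (gC x i - gC0 m i))
      + muDhi y i * ((gD x i - gD0 m i) - rDup p i) + muDlo y i * (- rDdn p i - (gD x i - gD0 m i))
      + rhoChi y i * (gC x i - gCmax p i) + rhoClo y i * (gCmin p i - gC x i)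
      + rhoDhi y i * (gD x i - gDmax p i) + rhoDlo y i * (gDmin p i - gD x i)
      + (\<Sum>k<KK m. \<Sum>t'\<in>scen_ints m.
          phis y i t' k * ((Es x i t' k - prevE m x i t' k) - (xiC p i * gCs x i t' k - gDs x i t' k / xiD p i))
        + dhis y i t' k * (Es x i t' k - Emax p i) + dlos y i t' k * (Emin p i - Es x i t' k)
        + muChis y i t' k * ((gCs x i t' k - prevC m x i t' k) - rCup p i)
        + muClos y i t' k * (- rCdn p i - (gCs x i t' k - prevC m x i t' k))
        + muDhis y i t' k * ((gDs x i t' k - prevD m x i t' k) - rDup p i)
        + muDlos y i t' k * (- rDdn p i - (gDs x i t' k - prevD m x i t' k))
        + rhoChis y i t' k * (gCs x i t' k - gCmax p i) + rhoClos y i t' k * (gCmin p i - gCs x i t' k)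
        + rhoDhis y i t' k * (gDs x i t' k - gDmax p i) + rhoDlos y i t' k * (gDmin p i - gDs x i t' k)))"

text \<open>Optimal primal-dual solution of P_t: x is an optimal solution, y is
  dual feasible, there is no duality gap (complementary slackness), and x
  minimizes the Lagrangian at y (Lagrangian saddle-point optimality).\<close>
definition opt_primal_dual :: "esr_data \<Rightarrow> mkt_data \<Rightarrow> primal \<Rightarrow> dual \<Rightarrow> bool" where
  "opt_primal_dual p m x y \<longleftrightarrow>
     feasible p m x
   \<and> (\<forall>x'. feasible p m x' \<longrightarrow> objective p m x \<le> objective p m x')
   \<and> dual_feasible m y
   \<and> lagrangian p m x y = objective p m x
   \<and> (\<forall>x'. lagrangian p m x y \<le> lagrangian p m x' y)"

definition LMP :: "dual \<Rightarrow> real" where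
  "LMP y = lam y"

definition DeltaC :: "mkt_data \<Rightarrow> dual \<Rightarrow> nat \<Rightarrow> real" where
  "DeltaC m y i = - (muChi y i - muClo y i)
     + (\<Sum>k<KK m. muChis y i (tt m + 1) k - muClos y i (tt m + 1) k)"

definition DeltaD :: "mkt_data \<Rightarrow> dual \<Rightarrow> nat \<Rightarrow> real" where
  "DeltaD m y i = - (muDhi y i - muDlo y i)
     + (\<Sum>k<KK m. muDhis y i (tt m + 1) k - muDlos y i (tt m + 1) k)"

definition TLMP_C :: "esr_data \<Rightarrow> mkt_data \<Rightarrow> dual \<Rightarrow> nat \<Rightarrow> real" where
  "TLMP_C p m y i = lam y - xiC p i * phi y i - DeltaC m y i"

definition TLMP_D :: "esr_data \<Rightarrow> mkt_data \<Rightarrow> dual \<Rightarrow> nat \<Rightarrow> real" where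
  "TLMP_D p m y i = lam y - phi y i / xiD p i + DeltaD m y i"

definition wf_data :: "esr_data \<Rightarrow> mkt_data \<Rightarrow> bool" where
  "wf_data p m \<longleftrightarrow>
     (\<forall>i<NN m. 0 < xiC p i \<and> xiC p i \<le> 1 \<and> 0 < xiD p i \<and> xiD p i \<le> 1
        \<and> Emin p i \<le> Emax p i \<and> gCmin p i \<le> gCmax p i \<and> gDmin p i \<le> gDmax p i)
   \<and> (\<forall>k<KK m. 0 \<le> eps m k) \<and> (\<Sum>k<KK m. eps m k) = 1"

end

theory Submission
  imports Defs
begin

text \<open>
  The strict inequalities make the corresponding slacks nonzero, so complementary slackness
  kills the SOC-limit multipliers of ESR i in every interval of the window and its ramping
  multipliers at t and t + 1; in particular Delta^C_it = Delta^D_it = 0.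
  The objective does not depend on the SOC variables, so the Lagrangian is affine in them, and
  minimality of the Lagrangian at the optimal primal point forces every coefficient to vanish:
  phi_it'k = phi_i(t'+1)k along each scenario, with phi_i(t+W-1)k = 0, and
  phi_it = sum_k phi_i(t+1)k. Backward induction gives phi_it = 0, so both TLMPs reduce to
  lambda_t.
\<close>

lemma sum_nonpos_eq_0_iff:
  fixes f :: "'a \<Rightarrow> 'b::ordered_ab_group_add"
  assumes "finite A" "\<And>x. x \<in> A \<Longrightarrow> f x \<le> 0"
  shows "sum f A = 0 \<longleftrightarrow> (\<forall>x\<in>A. f x = 0)"
  using sum_nonneg_eq_0_iff[of A "\<lambda>x. - f x"] assms by (simp add: sum_negf)

lemma zero_if_all_mult_nonneg:
  fixes c :: "'a::linordered_idom"
  assumes "\<And>s. 0 \<le> s * c"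
  shows "c = 0"
  using assms[of "- c"] by (simp add: le_less not_square_less_zero)

lemma backward_recursion_eq_0:
  fixes f :: "nat \<Rightarrow> 'a::zero"
  assumes recursion: "\<And>n. a \<le> n \<Longrightarrow> n < b \<Longrightarrow> f n = (if Suc n < b then f (Suc n) else 0)"
    and "a \<le> t" "t < b"
  shows "f t = 0"
proof -
  from \<open>t < b\<close> have "t \<le> b" by simp
  then have "t < b \<longrightarrow> f t = 0"
  proof (induction rule: inc_induct)
    case (step n)
    then show ?case using recursion[of n] \<open>a \<le> t\<close> by auto
  qed simp
  with \<open>t < b\<close> show ?thesis by simp
qed

definition binding_terms :: "esr_data \<Rightarrow> mkt_data \<Rightarrow> primal \<Rightarrow> dual \<Rightarrow> nat \<Rightarrow> real" where
  "binding_terms p m x y j =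
        phi y j * ((E x j - E0 m j) - (xiC p j * gC x j - gD x j / xiD p j))
      + dhi y j * (E x j - Emax p j) + dlo y j * (Emin p j - E x j)
      + muChi y j * ((gC x j - gC0 m j) - rCup p j) + muClo y j * (- rCdn p j - (gC x j - gC0 m j))
      + muDhi y j * ((gD x j - gD0 m j) - rDup p j) + muDlo y j * (- rDdn p j - (gD x j - gD0 m j))
      + rhoChi y j * (gC x j - gCmax p j) + rhoClo y j * (gCmin p j - gC x j)
      + rhoDhi y j * (gD x j - gDmax p j) + rhoDlo y j * (gDmin p j - gD x j)"

definition scenario_terms :: "esr_data \<Rightarrow> mkt_data \<Rightarrow> primal \<Rightarrow> dual \<Rightarrow> nat \<Rightarrow> nat \<Rightarrow> nat \<Rightarrow> real" where
  "scenario_terms p m x y j t' k =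
          phis y j t' k * ((Es x j t' k - prevE m x j t' k) - (xiC p j * gCs x j t' k - gDs x j t' k / xiD p j))
        + dhis y j t' k * (Es x j t' k - Emax p j) + dlos y j t' k * (Emin p j - Es x j t' k)
        + muChis y j t' k * ((gCs x j t' k - prevC m x j t' k) - rCup p j)
        + muClos y j t' k * (- rCdn p j - (gCs x j t' k - prevC m x j t' k))
        + muDhis y j t' k * ((gDs x j t' k - prevD m x j t' k) - rDup p j)
        + muDlos y j t' k * (- rDdn p j - (gDs x j t' k - prevD m x j t' k))
        + rhoChis y j t' k * (gCs x j t' k - gCmax p j) + rhoClos y j t' k * (gCmin p j - gCs x j t' k)
        + rhoDhis y j t' k * (gDs x j t' k - gDmax p j) + rhoDlos y j t' k * (gDmin p j - gDs x j t' k)"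

lemma finite_scen_ints [simp]: "finite (scen_ints m)"
  by (simp add: scen_ints_def)

lemma lagrangian_decomp:
  "lagrangian p m x y = objective p m x
   + lam y * (dem m - (\<Sum>i<NN m. gD x i - gC x i))
   + (\<Sum>k<KK m. \<Sum>t'\<in>scen_ints m. lams y t' k * (dhat m t' k - (\<Sum>i<NN m. gDs x i t' k - gCs x i t' k)))
   + (\<Sum>j<NN m. binding_terms p m x y j + (\<Sum>k<KK m. \<Sum>t'\<in>scen_ints m. scenario_terms p m x y j t' k))"
  unfolding lagrangian_def binding_terms_def scenario_terms_def by simp

lemma binding_slack_products_nonpos:
  assumes "feasible p m x" "dual_feasible m y" "j < NN m"
  shows "dhi y j * (E x j - Emax p j) \<le> 0" "dlo y j * (Emin p j - E x j) \<le> 0"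
    "muChi y j * ((gC x j - gC0 m j) - rCup p j) \<le> 0" "muClo y j * (- rCdn p j - (gC x j - gC0 m j)) \<le> 0"
    "muDhi y j * ((gD x j - gD0 m j) - rDup p j) \<le> 0" "muDlo y j * (- rDdn p j - (gD x j - gD0 m j)) \<le> 0"
    "rhoChi y j * (gC x j - gCmax p j) \<le> 0" "rhoClo y j * (gCmin p j - gC x j) \<le> 0"
    "rhoDhi y j * (gD x j - gDmax p j) \<le> 0" "rhoDlo y j * (gDmin p j - gD x j) \<le> 0"
  using assms unfolding feasible_def dual_feasible_def by (auto intro!: mult_nonneg_nonpos)

lemma binding_terms_feasible_eq:
  assumes "feasible p m x" "j < NN m"
  shows "binding_terms p m x y j =
        dhi y j * (E x j - Emax p j) + dlo y j * (Emin p j - E x j)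
      + muChi y j * ((gC x j - gC0 m j) - rCup p j) + muClo y j * (- rCdn p j - (gC x j - gC0 m j))
      + muDhi y j * ((gD x j - gD0 m j) - rDup p j) + muDlo y j * (- rDdn p j - (gD x j - gD0 m j))
      + rhoChi y j * (gC x j - gCmax p j) + rhoClo y j * (gCmin p j - gC x j)
      + rhoDhi y j * (gD x j - gDmax p j) + rhoDlo y j * (gDmin p j - gD x j)"
  using assms unfolding feasible_def binding_terms_def by simp

lemma binding_terms_nonpos:
  assumes "feasible p m x" "dual_feasible m y" "j < NN m"
  shows "binding_terms p m x y j \<le> 0"
  using binding_slack_products_nonpos[OF assms] binding_terms_feasible_eq[OF assms(1,3), of y] by linarith

lemma binding_terms_eq_0D:
  assumes "feasible p m x" "dual_feasible m y" "j < NN m" "binding_terms p m x y j = 0"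
  shows "dhi y j * (E x j - Emax p j) = 0" "dlo y j * (Emin p j - E x j) = 0"
    "muChi y j * ((gC x j - gC0 m j) - rCup p j) = 0" "muClo y j * (- rCdn p j - (gC x j - gC0 m j)) = 0"
    "muDhi y j * ((gD x j - gD0 m j) - rDup p j) = 0" "muDlo y j * (- rDdn p j - (gD x j - gD0 m j)) = 0"
  using binding_slack_products_nonpos[OF assms(1-3)] binding_terms_feasible_eq[OF assms(1,3), of y] assms(4)
  by linarith+

lemma scenario_slack_products_nonpos:
  assumes "feasible p m x" "dual_feasible m y" "j < NN m" "k < KK m" "t' \<in> scen_ints m"
  shows "dhis y j t' k * (Es x j t' k - Emax p j) \<le> 0" "dlos y j t' k * (Emin p j - Es x j t' k) \<le> 0"
    "muChis y j t' k * ((gCs x j t' k - prevC m x j t' k) - rCup p j) \<le> 0"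
    "muClos y j t' k * (- rCdn p j - (gCs x j t' k - prevC m x j t' k)) \<le> 0"
    "muDhis y j t' k * ((gDs x j t' k - prevD m x j t' k) - rDup p j) \<le> 0"
    "muDlos y j t' k * (- rDdn p j - (gDs x j t' k - prevD m x j t' k)) \<le> 0"
    "rhoChis y j t' k * (gCs x j t' k - gCmax p j) \<le> 0" "rhoClos y j t' k * (gCmin p j - gCs x j t' k) \<le> 0"
    "rhoDhis y j t' k * (gDs x j t' k - gDmax p j) \<le> 0" "rhoDlos y j t' k * (gDmin p j - gDs x j t' k) \<le> 0"
  using assms unfolding feasible_def dual_feasible_def by (auto intro!: mult_nonneg_nonpos)

lemma scenario_terms_feasible_eq:
  assumes "feasible p m x" "j < NN m" "k < KK m" "t' \<in> scen_ints m"
  shows "scenario_terms p m x y j t' k =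
          dhis y j t' k * (Es x j t' k - Emax p j) + dlos y j t' k * (Emin p j - Es x j t' k)
        + muChis y j t' k * ((gCs x j t' k - prevC m x j t' k) - rCup p j)
        + muClos y j t' k * (- rCdn p j - (gCs x j t' k - prevC m x j t' k))
        + muDhis y j t' k * ((gDs x j t' k - prevD m x j t' k) - rDup p j)
        + muDlos y j t' k * (- rDdn p j - (gDs x j t' k - prevD m x j t' k))
        + rhoChis y j t' k * (gCs x j t' k - gCmax p j) + rhoClos y j t' k * (gCmin p j - gCs x j t' k)
        + rhoDhis y j t' k * (gDs x j t' k - gDmax p j) + rhoDlos y j t' k * (gDmin p j - gDs x j t' k)"
  using assms unfolding feasible_def scenario_terms_def by simp

lemma scenario_terms_nonpos:
  assumes "feasible p m x" "dual_feasible m y" "j < NN m" "k < KK m" "t' \<in> scen_ints m"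
  shows "scenario_terms p m x y j t' k \<le> 0"
  using scenario_slack_products_nonpos[OF assms] scenario_terms_feasible_eq[OF assms(1,3-5), of y] by linarith

lemma scenario_terms_eq_0D:
  assumes "feasible p m x" "dual_feasible m y" "j < NN m" "k < KK m" "t' \<in> scen_ints m"
    and "scenario_terms p m x y j t' k = 0"
  shows "dhis y j t' k * (Es x j t' k - Emax p j) = 0" "dlos y j t' k * (Emin p j - Es x j t' k) = 0"
    "muChis y j t' k * ((gCs x j t' k - prevC m x j t' k) - rCup p j) = 0"
    "muClos y j t' k * (- rCdn p j - (gCs x j t' k - prevC m x j t' k)) = 0"
    "muDhis y j t' k * ((gDs x j t' k - prevD m x j t' k) - rDup p j) = 0"
    "muDlos y j t' k * (- rDdn p j - (gDs x j t' k - prevD m x j t' k)) = 0"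
  using scenario_slack_products_nonpos[OF assms(1-5)] scenario_terms_feasible_eq[OF assms(1,3-5), of y] assms(6)
  by linarith+

lemma complementary_slackness:
  assumes opt: "opt_primal_dual p m x y" and j: "j < NN m"
  shows "binding_terms p m x y j = 0"
    and "k < KK m \<Longrightarrow> t' \<in> scen_ints m \<Longrightarrow> scenario_terms p m x y j t' k = 0"
proof -
  have feas: "feasible p m x" and dfe: "dual_feasible m y"
    and LO: "lagrangian p m x y = objective p m x"
    using opt unfolding opt_primal_dual_def by blast+
  let ?U = "\<lambda>j k. \<Sum>t'\<in>scen_ints m. scenario_terms p m x y j t' k"
  have U_nonpos: "?U j k \<le> 0" if "j < NN m" "k < KK m" for j k
    using scenario_terms_nonpos[OF feas dfe] that by (simp add: sum_nonpos)
  have UU_nonpos: "(\<Sum>k<KK m. ?U j k) \<le> 0" if "j < NN m" for j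
    using that by (intro sum_nonpos[of "{..<KK m}"] U_nonpos) simp_all
  have "(\<Sum>k<KK m. \<Sum>t'\<in>scen_ints m. lams y t' k * (dhat m t' k - (\<Sum>i<NN m. gDs x i t' k - gCs x i t' k))) = 0"
    using feas unfolding feasible_def by (intro sum.neutral ballI) auto
  with LO feas have "(\<Sum>j<NN m. binding_terms p m x y j + (\<Sum>k<KK m. ?U j k)) = 0"
    unfolding lagrangian_decomp feasible_def by simp
  then have "binding_terms p m x y j + (\<Sum>k<KK m. ?U j k) = 0"
    using j binding_terms_nonpos[OF feas dfe] UU_nonpos
    by (subst (asm) sum_nonpos_eq_0_iff) (auto intro: add_nonpos_nonpos)
  then have B0: "binding_terms p m x y j = 0" and UU0: "(\<Sum>k<KK m. ?U j k) = 0"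
    using binding_terms_nonpos[OF feas dfe j] UU_nonpos[OF j] by linarith+
  show "binding_terms p m x y j = 0" by (fact B0)
  show "scenario_terms p m x y j t' k = 0" if k: "k < KK m" and t': "t' \<in> scen_ints m"
  proof -
    have "?U j k = 0"
      using UU0 k by (subst (asm) sum_nonpos_eq_0_iff) (use U_nonpos j in auto)
    then show ?thesis
      using t' by (subst (asm) sum_nonpos_eq_0_iff) (use scenario_terms_nonpos[OF feas dfe j k] in auto)
  qed
qed

lemma lagrangian_soc_change:
  assumes "gC x' = gC x" "gD x' = gD x" "gCs x' = gCs x" "gDs x' = gDs x"
  shows "lagrangian p m x' y - lagrangian p m x y =
    (\<Sum>j<NN m. (phi y j + dhi y j - dlo y j) * (E x' j - E x j)
      + (\<Sum>k<KK m. \<Sum>t'\<in>scen_ints m.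
           (phis y j t' k + dhis y j t' k - dlos y j t' k) * (Es x' j t' k - Es x j t' k)
         - phis y j t' k * (prevE m x' j t' k - prevE m x j t' k)))" (is "_ = ?rhs")
proof -
  have "prevC m x' = prevC m x" "prevD m x' = prevD m x"
    using assms by (auto simp: prevC_def prevD_def fun_eq_iff)
  moreover have "objective p m x' = objective p m x"
    using assms by (simp add: objective_def)
  ultimately have "lagrangian p m x' y - lagrangian p m x y =
    (\<Sum>j<NN m. (binding_terms p m x' y j - binding_terms p m x y j)
      + (\<Sum>k<KK m. \<Sum>t'\<in>scen_ints m. scenario_terms p m x' y j t' k - scenario_terms p m x y j t' k))"
    unfolding lagrangian_decomp assms by (simp add: sum_subtractf algebra_simps)
  also have "\<dots> = ?rhs"
    unfolding binding_terms_def scenario_terms_def assms \<open>prevC m x' = prevC m x\<close> \<open>prevD m x' = prevD m x\<close>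
    by (intro sum.cong refl arg_cong2[where f = "(+)"]) (simp_all add: algebra_simps)
  finally show ?thesis .
qed

lemma lagrangian_shift_E:
  assumes "i < NN m" "tt m + 1 \<in> scen_ints m"
  shows "lagrangian p m (x\<lparr>E := (E x)(i := E x i + s)\<rparr>) y - lagrangian p m x y
       = s * (phi y i + dhi y i - dlo y i - (\<Sum>k<KK m. phis y i (tt m + 1) k))"
    (is "_ = ?c")
proof -
  let ?x' = "x\<lparr>E := (E x)(i := E x i + s)\<rparr>"
  have "prevE m ?x' j t' k - prevE m x j t' k = (if t' = tt m + 1 \<and> j = i then s else 0)" for j t' k
    by (simp add: prevE_def)
  then have "(phi y j + dhi y j - dlo y j) * (E ?x' j - E x j)
      + (\<Sum>k<KK m. \<Sum>t'\<in>scen_ints m.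
           (phis y j t' k + dhis y j t' k - dlos y j t' k) * (Es ?x' j t' k - Es x j t' k)
         - phis y j t' k * (prevE m ?x' j t' k - prevE m x j t' k))
      = (if j = i then ?c else 0)" for j
    using assms(2) by (cases "j = i")
      (simp_all add: if_distrib[of "\<lambda>u. _ * u"] sum_negf sum_distrib_left right_diff_distrib
         mult.commute cong: if_cong)
  then show ?thesis
    using assms(1) by (simp add: lagrangian_soc_change)
qed

lemma lagrangian_shift_Es:
  assumes "i < NN m" "t0 \<in> scen_ints m" "k0 < KK m"
  shows "lagrangian p m (x\<lparr>Es := (\<lambda>j t k. Es x j t k + (if j = i \<and> t = t0 \<and> k = k0 then s else 0))\<rparr>) y
       - lagrangian p m x y
       = s * (phis y i t0 k0 + dhis y i t0 k0 - dlos y i t0 k0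
            - (if t0 + 1 \<in> scen_ints m then phis y i (t0 + 1) k0 else 0))"
    (is "_ = ?c")
proof -
  let ?x' = "x\<lparr>Es := (\<lambda>j t k. Es x j t k + (if j = i \<and> t = t0 \<and> k = k0 then s else 0))\<rparr>"
  have "tt m + 1 \<le> t0" using assms(2) by (simp add: scen_ints_def)
  then have "prevE m ?x' j t' k - prevE m x j t' k = (if j = i \<and> t' = t0 + 1 \<and> k = k0 then s else 0)" for j t' k
    by (auto simp: prevE_def)
  then have "(\<Sum>t'\<in>scen_ints m.
           (phis y j t' k + dhis y j t' k - dlos y j t' k) * (Es ?x' j t' k - Es x j t' k)
         - phis y j t' k * (prevE m ?x' j t' k - prevE m x j t' k))
      = (if k = k0 then if j = i then ?c else 0 else 0)" for j k
    using assms(2) by (cases "j = i \<and> k = k0")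
      (auto simp: if_distrib[of "\<lambda>u. _ * u"] if_distrib[of "\<lambda>u. u * _"] sum_subtractf sum.distrib
         right_diff_distrib mult.commute cong: if_cong)
  then show ?thesis
    using assms(1,3) by (simp add: lagrangian_soc_change)
qed

lemma soc_stationarity_binding:
  assumes "opt_primal_dual p m x y" "i < NN m" "tt m + 1 \<in> scen_ints m"
  shows "phi y i + dhi y i - dlo y i - (\<Sum>k<KK m. phis y i (tt m + 1) k) = 0"
proof (rule zero_if_all_mult_nonneg)
  fix s
  show "0 \<le> s * (phi y i + dhi y i - dlo y i - (\<Sum>k<KK m. phis y i (tt m + 1) k))"
    using assms(1) lagrangian_shift_E[OF assms(2,3), of p x s y]
    unfolding opt_primal_dual_def by (smt (verit))
qed

lemma soc_stationarity_scenario: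
  assumes "opt_primal_dual p m x y" "i < NN m" "t0 \<in> scen_ints m" "k0 < KK m"
  shows "phis y i t0 k0 + dhis y i t0 k0 - dlos y i t0 k0
           - (if t0 + 1 \<in> scen_ints m then phis y i (t0 + 1) k0 else 0) = 0"
proof (rule zero_if_all_mult_nonneg)
  fix s
  show "0 \<le> s * (phis y i t0 k0 + dhis y i t0 k0 - dlos y i t0 k0
           - (if t0 + 1 \<in> scen_ints m then phis y i (t0 + 1) k0 else 0))"
    using assms(1) lagrangian_shift_Es[OF assms(2-4), of p x s y]
    unfolding opt_primal_dual_def by (smt (verit))
qed

lemma scenario_soc_transition_mults_eq_0:
  assumes opt: "opt_primal_dual p m x y" and i: "i < NN m" and k: "k < KK m"
    and soc_free: "\<And>t'. t' \<in> scen_ints m \<Longrightarrow> dhis y i t' k = 0 \<and> dlos y i t' k = 0"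
    and t': "t' \<in> scen_ints m"
  shows "phis y i t' k = 0"
proof (rule backward_recursion_eq_0[where f = "\<lambda>n. phis y i n k" and a = "tt m + 1" and b = "tt m + WW m"])
  show "phis y i n k = (if Suc n < tt m + WW m then phis y i (Suc n) k else 0)"
    if "tt m + 1 \<le> n" "n < tt m + WW m" for n
    using soc_stationarity_scenario[OF opt i _ k, of n] soc_free[of n] that
    by (simp add: scen_ints_def)
qed (use t' in \<open>simp_all add: scen_ints_def\<close>)

theorem corollary1:
  fixes p :: esr_data and m :: mkt_data and x :: primal and y :: dual and i :: nat
  assumes wf: "wf_data p m"
    and W2: "2 \<le> WW m"
    and opt: "opt_primal_dual p m x y"
    and iN: "i < NN m"
    and ramp_t: "- rCdn p i < gC x i - gC0 m i" "gC x i - gC0 m i < rCup p i"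
                "- rDdn p i < gD x i - gD0 m i" "gD x i - gD0 m i < rDup p i"
    and ramp_t1: "\<forall>k<KK m.
                  - rCdn p i < gCs x i (tt m + 1) k - gC x i \<and> gCs x i (tt m + 1) k - gC x i < rCup p i
                \<and> - rDdn p i < gDs x i (tt m + 1) k - gD x i \<and> gDs x i (tt m + 1) k - gD x i < rDup p i"
    and soc_t: "Emin p i < E x i" "E x i < Emax p i"
    and soc_s: "\<forall>k<KK m. \<forall>t'\<in>scen_ints m. Emin p i < Es x i t' k \<and> Es x i t' k < Emax p i"
  shows "TLMP_C p m y i = LMP y \<and> TLMP_D p m y i = LMP y"
proof -
  let ?S = "scen_ints m"
  have feas: "feasible p m x" and dfe: "dual_feasible m y"
    using opt unfolding opt_primal_dual_def by blast+
  have t1: "tt m + 1 \<in> ?S"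
    using W2 by (simp add: scen_ints_def)
  have binding_mults: "dhi y i = 0" "dlo y i = 0" "muChi y i = 0" "muClo y i = 0" "muDhi y i = 0" "muDlo y i = 0"
    using binding_terms_eq_0D[OF feas dfe iN complementary_slackness(1)[OF opt iN]] ramp_t soc_t by auto
  note scen_eq_0D = scenario_terms_eq_0D[OF feas dfe iN _ _ complementary_slackness(2)[OF opt iN]]
  have soc_mults: "dhis y i t' k = 0 \<and> dlos y i t' k = 0" if "k < KK m" "t' \<in> ?S" for k t'
    using scen_eq_0D(1,2)[OF that that] soc_s[rule_format, OF that] by auto
  have ramp_mults: "muChis y i (tt m + 1) k = 0 \<and> muClos y i (tt m + 1) k = 0
      \<and> muDhis y i (tt m + 1) k = 0 \<and> muDlos y i (tt m + 1) k = 0" if "k < KK m" for k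
    using scen_eq_0D(3-6)[OF that t1 that t1] ramp_t1 that by (auto simp: prevC_def prevD_def)
  have "phis y i (tt m + 1) k = 0" if "k < KK m" for k
    using scenario_soc_transition_mults_eq_0[OF opt iN that soc_mults[OF that] t1] .
  then have "phi y i = 0"
    using soc_stationarity_binding[OF opt iN t1] binding_mults t1 by simp
  moreover have "DeltaC m y i = 0" "DeltaD m y i = 0"
    unfolding DeltaC_def DeltaD_def using binding_mults ramp_mults by simp_all
  ultimately show ?thesis
    unfolding TLMP_C_def TLMP_D_def LMP_def by simp
qed

end
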